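(* Let $(M,I,J,K)$ be a hypercomplex manifold of quaternionic dimension $n$, let $\Omega_1$ be a strictly positive $(2,0)$-form (w.r.t. $I$), i.e. $\Omega_1(z,\bar zJ)>0$ for every nonzero $(1,0)$-vector $z$, and let $\Omega_2$ be a q-real $(2,0)$-form on $M$. Then for each $x\in M$ there exists a basis $e_1,\bar e_1J,\dots,e_n,\bar e_nJ$ of $T^{1,0}_xM$ such that for all $i\ne j$ $$\Omega_1(e_i,e_j)=\Omega_2(e_i,e_j)=\Omega_1(e_i,\bar e_jJ)=\Omega_2(e_i,\bar e_jJ)=0.$$
   Context: A hypercomplex manifold $(M,I,J,K)$ carries three integrable complex structures with $I\circ J\circ K=-\mathrm{id}_{TM}$; endomorphisms act on tangent vectors from the right (written $v\mapsto vJ$, extended complex-linearly); types $(p,q)$ and $T^{1,0}M$ refer to $I$, and $J$ maps $T^{0,1}_xM$ to $T^{1,0}_xM$. An endomorphism $L$ acts on forms by $(L\alpha)(X_1,\dots,X_k)=\alpha(X_1L,\dots,X_kL)$. A $(2,0)$-form $\alpha$ is q-real if $J\alpha=\bar\alpha$. *)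

theory Defs
  imports "HOL-Analysis.Analysis"
begin

text \<open>Pointwise linear-algebra model of a hypercomplex manifold at a point x.
  The real tangent space T_xM is a finite-dimensional real vector space 'v,
  I, J, K are real-linear endomorphisms acting from the right (v I is written I v,
  so v I J K is K (J (I v))).  The complexification T_xM (x) C is modelled as
  pairs (x, y) standing for x + i y.\<close>

definition cscale :: "complex \<Rightarrow> ('v::real_vector \<times> 'v) \<Rightarrow> 'v \<times> 'v" where
  "cscale c w = (Re c *\<^sub>R fst w - Im c *\<^sub>R snd w, Im c *\<^sub>R fst w + Re c *\<^sub>R snd w)"

definition cext :: "('v \<Rightarrow> 'v) \<Rightarrow> ('v \<times> 'v) \<Rightarrow> 'v \<times> 'v" where
  "cext f w = (f (fst w), f (snd w))"

definition cconj :: "('v::real_vector \<times> 'v) \<Rightarrow> 'v \<times> 'v" where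
  "cconj w = (fst w, - snd w)"

definition cform :: "('v \<Rightarrow> 'v \<Rightarrow> complex) \<Rightarrow> ('v \<times> 'v) \<Rightarrow> ('v \<times> 'v) \<Rightarrow> complex" where
  "cform \<alpha> u w = \<alpha> (fst u) (fst w) + \<i> * \<alpha> (fst u) (snd w) + \<i> * \<alpha> (snd u) (fst w)
                 - \<alpha> (snd u) (snd w)"

definition T10 :: "('v::real_vector \<Rightarrow> 'v) \<Rightarrow> ('v \<times> 'v) set" where
  "T10 I = {w. cext I w = cscale \<i> w}"

definition T01 :: "('v::real_vector \<Rightarrow> 'v) \<Rightarrow> ('v \<times> 'v) set" where
  "T01 I = {w. cext I w = cscale (- \<i>) w}"

definition hypercomplex :: "('v::real_vector \<Rightarrow> 'v) \<Rightarrow> ('v \<Rightarrow> 'v) \<Rightarrow> ('v \<Rightarrow> 'v) \<Rightarrow> bool" where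
  "hypercomplex I J K \<longleftrightarrow> linear I \<and> linear J \<and> linear K \<and>
     (\<forall>v. I (I v) = - v) \<and> (\<forall>v. J (J v) = - v) \<and> (\<forall>v. K (K v) = - v) \<and>
     (\<forall>v. K (J (I v)) = - v)"

definition two_form :: "('v::real_vector \<Rightarrow> 'v \<Rightarrow> complex) \<Rightarrow> bool" where
  "two_form \<alpha> \<longleftrightarrow> bilinear \<alpha> \<and> (\<forall>x y. \<alpha> x y = - \<alpha> y x)"

definition form20 :: "('v::real_vector \<Rightarrow> 'v) \<Rightarrow> ('v \<Rightarrow> 'v \<Rightarrow> complex) \<Rightarrow> bool" where
  "form20 I \<alpha> \<longleftrightarrow> two_form \<alpha> \<and>
     (\<forall>u w. u \<in> T01 I \<longrightarrow> cform \<alpha> u w = 0 \<and> cform \<alpha> w u = 0)"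

text \<open>q-real: J alpha = conj alpha, i.e. alpha(XJ, YJ) = conj(alpha(X,Y)) for real X, Y\<close>
definition q_real :: "('v \<Rightarrow> 'v) \<Rightarrow> ('v \<Rightarrow> 'v \<Rightarrow> complex) \<Rightarrow> bool" where
  "q_real J \<alpha> \<longleftrightarrow> (\<forall>x y. \<alpha> (J x) (J y) = cnj (\<alpha> x y))"

definition strictly_positive ::
  "('v::real_vector \<Rightarrow> 'v) \<Rightarrow> ('v \<Rightarrow> 'v) \<Rightarrow> ('v \<Rightarrow> 'v \<Rightarrow> complex) \<Rightarrow> bool" where
  "strictly_positive I J \<Omega> \<longleftrightarrow>
     (\<forall>z \<in> T10 I. z \<noteq> 0 \<longrightarrow>
        Im (cform \<Omega> z (cext J (cconj z))) = 0 \<and> Re (cform \<Omega> z (cext J (cconj z))) > 0)"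

end

(* Omega1 yields the Hermitian form h1(a, b) = Omega1(a, bJ) on the real tangent space, positive
   definite and invariant under I and J, and Omega2 a Hermitian form h2.  Choose x_1 minimising the
   Rayleigh quotient h2(x, x) / h1(x, x), then x_2 on the h1-orthogonal complement of the
   quaternionic line x_1 H, and so on.  The first-order condition gives
   Omega2(x_i, w) = l_i Omega1(x_i, w) on the complement in which x_i was chosen, so all mixed
   values of Omega1 and Omega2 vanish.  The 4n vectors x_i, x_i I, x_i J, x_i JI are h1-orthogonal,
   hence a real basis, and therefore e_i = x_i - sqrt(-1) x_i I together with the bar(e_i) J form a
   complex basis of T^{1,0}. *)

theory Submission
  imports Defs
begin

context vector_space begin

lemma orthogonal_family_independent:
  fixes h :: "'b \<Rightarrow> 'b \<Rightarrow> 'a" and v :: "'i \<Rightarrow> 'b"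
  assumes add: "\<And>u u' w. h (u + u') w = h u w + h u' w"
    and hom: "\<And>c u w. h (scale c u) w = c * h u w"
    and diag: "\<And>i. i \<in> A \<Longrightarrow> h (v i) (v i) \<noteq> 0"
    and orth: "\<And>i j. i \<in> A \<Longrightarrow> j \<in> A \<Longrightarrow> i \<noteq> j \<Longrightarrow> h (v i) (v j) = 0"
  shows "inj_on v A \<and> independent (v ` A)"
proof
  show inj: "inj_on v A"
    by (rule inj_onI) (metis diag orth)
  show "independent (v ` A)"
  proof
    assume "dependent (v ` A)"
    then obtain T c s where T: "finite T" "T \<subseteq> v ` A" and comb: "(\<Sum>t\<in>T. scale (c t) t) = 0"
      and s: "s \<in> T" "c s \<noteq> 0"
      unfolding dependent_explicit by blast
    have h0: "h 0 w = 0" for w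
      using hom[of 0 0 w] by simp
    have orthT: "h t s = 0" if "t \<in> T" "t \<noteq> s" for t
      using that s T orth by blast
    have "h (\<Sum>t\<in>T. scale (c t) t) s = (\<Sum>t\<in>T. c t * h t s)"
      using sum_comp_morphism[of "\<lambda>u. h u s" "\<lambda>t. scale (c t) t" T] h0 add
      by (simp add: o_def hom)
    also have "\<dots> = c s * h s s"
      using T(1) s(1) orthT by (simp add: sum.remove)
    finally have "c s * h s s = 0"
      using comb h0 by simp
    then show False
      using s T diag by auto
  qed
qed

end

lemma quadratic_nonneg_imp_linear_coeff_zero:
  fixes b q :: real
  assumes "\<And>t. 0 \<le> 2 * t * b + t\<^sup>2 * q"
  shows "b = 0"
proof -
  define c where "c = \<bar>q\<bar> + 1"
  have "c > 0" "q < 2 * c"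
    unfolding c_def by (auto simp: abs_if)
  have "0 \<le> 2 * (- b / c) * b + (- b / c)\<^sup>2 * q"
    by (rule assms)
  also have "\<dots> = b\<^sup>2 * (q - 2 * c) / c\<^sup>2"
    using \<open>c > 0\<close> by (simp add: field_simps power2_eq_square)
  finally have "b\<^sup>2 * (q - 2 * c) \<ge> 0"
    using \<open>c > 0\<close> by (simp add: zero_le_divide_iff)
  then show "b = 0"
    using \<open>q < 2 * c\<close> by (simp add: mult_nonneg_nonpos2 zero_le_mult_iff)
qed

lemma bilinear_form_kernel_nontrivial:
  fixes b :: "'v::euclidean_space \<Rightarrow> 'v \<Rightarrow> real"
  assumes "bilinear b" and "dim S < DIM('v)"
  obtains w where "w \<noteq> 0" "\<And>s. s \<in> S \<Longrightarrow> b s w = 0"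
proof -
  define R where "R s = (\<Sum>u\<in>Basis. b s u *\<^sub>R u)" for s
  have "linear R"
    using assms(1) unfolding R_def
    by (intro linearI) (simp_all add: bilinear_ladd bilinear_lmul scaleR_add_left sum.distrib scaleR_sum_right)
  have R: "b s w = R s \<bullet> w" for s w
  proof -
    have "b s w = b s (\<Sum>u\<in>Basis. (w \<bullet> u) *\<^sub>R u)"
      by (simp add: euclidean_representation)
    also have "\<dots> = (\<Sum>u\<in>Basis. (w \<bullet> u) * b s u)"
      using assms(1) by (simp add: bilinear_def linear_sum linear_cmul)
    finally show ?thesis
      unfolding R_def by (simp add: inner_sum_right inner_commute mult.commute)
  qed
  have "dim (R ` S) < DIM('v)"
    using dim_image_le[OF \<open>linear R\<close>, of S] assms(2) by linarith
  then obtain w where "w \<noteq> 0" and w: "\<And>y. y \<in> span (R ` S) \<Longrightarrow> orthogonal w y"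
    by (rule orthogonal_to_subspace_exists) blast
  moreover have "b s w = 0" if "s \<in> S" for s
    using w[of "R s"] that R by (simp add: orthogonal_def span_base inner_commute)
  ultimately show thesis
    using that by blast
qed

lemma bilinear_expand_square:
  assumes "bilinear b" and "\<And>x y. b x y = b y x"
  shows "b (x + t *\<^sub>R y) (x + t *\<^sub>R y) = b x x + 2 * t * b x y + t\<^sup>2 * b y y"
  using assms(1) assms(2)[of y x]
  by (simp add: bilinear_ladd bilinear_radd bilinear_lmul bilinear_rmul algebra_simps power2_eq_square)

(* e minimises b2/b1 on the unit sphere of W; then b2 - l b1 is nonnegative on W and vanishes at e,
   so its first variation at e vanishes. *)
lemma generalized_eigenvector_exists:
  fixes b1 b2 :: "'v::euclidean_space \<Rightarrow> 'v \<Rightarrow> real" and W :: "'v set"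
  assumes bil: "bilinear b1" "bilinear b2"
    and sym: "\<And>x y. b1 x y = b1 y x" "\<And>x y. b2 x y = b2 y x"
    and pos: "\<And>x. x \<noteq> 0 \<Longrightarrow> b1 x x > 0"
    and W: "subspace W" "w0 \<in> W" "w0 \<noteq> 0"
  obtains e l where "e \<in> W" "e \<noteq> 0" "\<And>w. w \<in> W \<Longrightarrow> b2 e w = l * b1 e w"
proof -
  define C where "C = W \<inter> sphere 0 1"
  define f where "f y = b2 y y / b1 y y" for y
  have "compact C"
    unfolding C_def using closed_subspace[OF W(1)] by (simp add: closed_Int_compact)
  moreover have "(1 / norm w0) *\<^sub>R w0 \<in> C"
    unfolding C_def using W by (simp add: subspace_scale)
  then have "C \<noteq> {}" by blast
  moreover have "continuous_on C f"
    unfolding f_def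
  proof (rule continuous_on_divide)
    show "continuous_on C (\<lambda>y. b1 y y)" "continuous_on C (\<lambda>y. b2 y y)"
      using bil by (auto intro: bilinear_continuous_on_compose continuous_on_id)
    show "\<forall>y\<in>C. b1 y y \<noteq> 0"
      unfolding C_def using pos by (metis IntD2 less_irrefl norm_zero mem_sphere_0 zero_neq_one)
  qed
  ultimately obtain e where "e \<in> C" and e_min: "\<forall>y\<in>C. f e \<le> f y"
    by (rule continuous_attains_inf[elim_format]) blast
  then have "e \<in> W" "e \<noteq> 0"
    unfolding C_def by auto
  define l where "l = f e"
  define Q where "Q w = b2 w w - l * b1 w w" for w
  have Q_nonneg: "Q w \<ge> 0" if "w \<in> W" for w
  proof (cases "w = 0")
    case True
    then show ?thesis
      using bil unfolding Q_def by (simp add: bilinear_lzero)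
  next
    case False
    have "(1 / norm w) *\<^sub>R w \<in> C"
      unfolding C_def using that False W(1) by (simp add: subspace_scale)
    moreover have "f ((1 / norm w) *\<^sub>R w) = f w"
      unfolding f_def using bil False by (simp add: bilinear_lmul bilinear_rmul)
    ultimately have "l \<le> f w"
      using e_min unfolding l_def by fastforce
    then show ?thesis
      unfolding Q_def f_def using pos[OF False] by (simp add: pos_le_divide_eq)
  qed
  have "Q e = 0"
    unfolding Q_def l_def f_def using pos[OF \<open>e \<noteq> 0\<close>] by simp
  have "b2 e w - l * b1 e w = 0" if "w \<in> W" for w
  proof (rule quadratic_nonneg_imp_linear_coeff_zero)
    fix t
    have "e + t *\<^sub>R w \<in> W"
      using W(1) \<open>e \<in> W\<close> that by (simp add: subspace_add subspace_scale)
    then have "0 \<le> Q (e + t *\<^sub>R w)"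
      by (rule Q_nonneg)
    also have "\<dots> = Q e + 2 * t * (b2 e w - l * b1 e w) + t\<^sup>2 * Q w"
      unfolding Q_def bilinear_expand_square[OF bil(1) sym(1)] bilinear_expand_square[OF bil(2) sym(2)]
      by (simp add: algebra_simps)
    finally show "0 \<le> 2 * t * (b2 e w - l * b1 e w) + t\<^sup>2 * Q w"
      using \<open>Q e = 0\<close> by simp
  qed
  then show thesis
    using that \<open>e \<in> W\<close> \<open>e \<noteq> 0\<close> by (metis diff_eq_eq add_0)
qed

lemma hypercomplex_anticommute:
  assumes "hypercomplex I J K"
  shows "J (I v) = - I (J v)"
proof -
  have lin: "linear I" "linear J" "linear K"
    and I_I: "\<And>v. I (I v) = - v" and J_J: "\<And>v. J (J v) = - v" and K_K: "\<And>v. K (K v) = - v"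
    and K_J_I: "\<And>v. K (J (I v)) = - v"
    using assms unfolding hypercomplex_def by auto
  have J_I: "J (I v) = K v" for v
    using arg_cong[OF K_J_I, of K, of v] K_K linear_neg[OF lin(3)] by simp
  have I_K: "I (K v) = J v" for v
  proof -
    have "J (I (K v)) = - v"
      using K_K[of v] J_I by simp
    then have "J (J (I (K v))) = J (- v)"
      by simp
    then show ?thesis
      using J_J linear_neg[OF lin(2)] by simp
  qed
  have "I (J (I v)) = J v" for v
    using I_K J_I by simp
  from this[of "- I v"] show ?thesis
    using I_I linear_neg[OF lin(1)] linear_neg[OF lin(2)] by (simp add: J_I)
qed

locale quaternionic_structure =
  fixes I J :: "'v::real_vector \<Rightarrow> 'v"
  assumes linear_I: "linear I" and linear_J: "linear J"
    and I_I [simp]: "I (I v) = - v" and J_J [simp]: "J (J v) = - v"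
    and J_I: "J (I v) = - I (J v)"
begin

lemma I_simps [simp]:
  "I (a + b) = I a + I b" "I (a - b) = I a - I b" "I (- a) = - I a" "I (c *\<^sub>R a) = c *\<^sub>R I a" "I 0 = 0"
  using linear_I by (simp_all add: linear_add linear_diff linear_neg linear_scale linear_0)

lemma J_simps [simp]:
  "J (a + b) = J a + J b" "J (a - b) = J a - J b" "J (- a) = - J a" "J (c *\<^sub>R a) = c *\<^sub>R J a" "J 0 = 0"
  using linear_J by (simp_all add: linear_add linear_diff linear_neg linear_scale linear_0)

lemma J_eq_0_iff [simp]: "J a = 0 \<longleftrightarrow> a = 0"
  by (metis J_J J_simps(5) neg_0_equal_iff_equal)

lemma I_eq_0_iff [simp]: "I a = 0 \<longleftrightarrow> a = 0"
  by (metis I_I I_simps(5) neg_0_equal_iff_equal)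

(* The real isomorphism v \<mapsto> v - \<i> vI from the real tangent space onto T^{1,0}. *)
definition to_T10 :: "'v \<Rightarrow> 'v \<times> 'v" where
  "to_T10 a = (a, - I a)"

lemma to_T10_in_T10: "to_T10 a \<in> T10 I"
  unfolding to_T10_def T10_def by (simp add: cext_def cscale_def)

lemma T10_eq_range_to_T10: "T10 I = range to_T10"
  unfolding to_T10_def T10_def by (auto simp: cext_def cscale_def image_iff prod_eq_iff)

lemma to_T10_inj: "to_T10 a = to_T10 b \<longleftrightarrow> a = b"
  unfolding to_T10_def by auto

lemma to_T10_0 [simp]: "to_T10 0 = 0"
  unfolding to_T10_def by (simp add: zero_prod_def)

lemma to_T10_add: "to_T10 (a + b) = to_T10 a + to_T10 b"
  unfolding to_T10_def by simp

lemma to_T10_scaleR: "to_T10 (r *\<^sub>R a) = cscale (of_real r) (to_T10 a)"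
  unfolding to_T10_def by (simp add: cscale_def)

lemma to_T10_I: "to_T10 (I a) = cscale \<i> (to_T10 a)"
  unfolding to_T10_def by (simp add: cscale_def)

lemma cscale_to_T10: "cscale c (to_T10 a) = to_T10 (Re c *\<^sub>R a + Im c *\<^sub>R I a)"
  unfolding to_T10_def by (simp add: cscale_def algebra_simps)

lemma cext_J_cconj_to_T10 [simp]: "cext J (cconj (to_T10 a)) = to_T10 (J a)"
  unfolding to_T10_def by (simp add: cext_def cconj_def J_I)

(* Right multiplication by the quaternion units: qmul (s, t) v is v J^t I^s, i.e. v, vI, vJ, vJI. *)
definition qmul :: "bool \<times> bool \<Rightarrow> 'v \<Rightarrow> 'v" where
  "qmul c v = (if fst c then I else id) (if snd c then J v else v)"

end

lemma vector_space_cscale: "vector_space (cscale :: complex \<Rightarrow> 'v::real_vector \<times> 'v \<Rightarrow> _)"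
  by standard (auto simp: cscale_def prod_eq_iff algebra_simps)

lemma cform_add_left:
  assumes "bilinear \<alpha>"
  shows "cform \<alpha> (u + u') w = cform \<alpha> u w + cform \<alpha> u' w"
  using assms unfolding cform_def by (simp add: bilinear_ladd algebra_simps)

lemma cform_cscale_left:
  assumes "bilinear \<alpha>"
  shows "cform \<alpha> (cscale c u) w = c * cform \<alpha> u w"
  using assms unfolding cform_def cscale_def
  by (simp add: bilinear_ladd bilinear_lsub bilinear_lmul scaleR_conv_of_real complex_eq_iff algebra_simps)

locale form20_on = quaternionic_structure I J for I J :: "'v::real_vector \<Rightarrow> 'v" +
  fixes \<alpha> :: "'v \<Rightarrow> 'v \<Rightarrow> complex"
  assumes form20: "form20 I \<alpha>"
begin

lemma bilinear: "bilinear \<alpha>"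
  using form20 unfolding form20_def two_form_def by blast

lemma antisym: "\<alpha> x y = - \<alpha> y x"
  using form20 unfolding form20_def two_form_def by blast

lemma form_simps [simp]:
  "\<alpha> (a + b) y = \<alpha> a y + \<alpha> b y" "\<alpha> x (a + b) = \<alpha> x a + \<alpha> x b"
  "\<alpha> (a - b) y = \<alpha> a y - \<alpha> b y" "\<alpha> x (a - b) = \<alpha> x a - \<alpha> x b"
  "\<alpha> (- a) y = - \<alpha> a y" "\<alpha> x (- b) = - \<alpha> x b"
  "\<alpha> (c *\<^sub>R a) y = c *\<^sub>R \<alpha> a y" "\<alpha> x (c *\<^sub>R b) = c *\<^sub>R \<alpha> x b"
  "\<alpha> 0 y = 0" "\<alpha> x 0 = 0"
  using bilinear by (simp_all add: bilinear_ladd bilinear_radd bilinear_lsub bilinear_rsub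
      bilinear_lneg bilinear_rneg bilinear_lmul bilinear_rmul bilinear_lzero bilinear_rzero)

lemma self_eq_0 [simp]: "\<alpha> x x = 0"
  using antisym[of x x] by simp

lemma I_left [simp]: "\<alpha> (I x) y = \<i> * \<alpha> x y"
proof -
  have "(x, I x) \<in> T01 I"
    unfolding T01_def by (simp add: cext_def cscale_def)
  then have "cform \<alpha> (x, I x) (y, 0) = 0"
    using form20 unfolding form20_def by blast
  then have "\<alpha> x y + \<i> * \<alpha> (I x) y = 0"
    unfolding cform_def by simp
  then show ?thesis
    by (simp add: complex_eq_iff)
qed

lemma I_right [simp]: "\<alpha> x (I y) = \<i> * \<alpha> x y"
  using antisym[of x "I y"] antisym[of y x] by simp

lemma cform_to_T10: "cform \<alpha> (to_T10 a) (to_T10 b) = 4 * \<alpha> a b"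
  unfolding to_T10_def cform_def by (simp add: algebra_simps)

(* Hermitian for I when \<alpha> is q-real; positive definite when \<alpha> is strictly positive. *)
definition herm :: "'v \<Rightarrow> 'v \<Rightarrow> complex" where
  "herm a b = \<alpha> a (J b)"

lemma herm_simps [simp]:
  "herm (a + b) y = herm a y + herm b y" "herm x (a + b) = herm x a + herm x b"
  "herm (c *\<^sub>R a) y = c *\<^sub>R herm a y" "herm x (c *\<^sub>R b) = c *\<^sub>R herm x b"
  "herm (I a) y = \<i> * herm a y" "herm x (I b) = - \<i> * herm x b"
  "herm 0 y = 0" "herm x 0 = 0"
  unfolding herm_def by (simp_all add: J_I)

lemma herm_J_right: "herm a (J b) = - \<alpha> a b"
  unfolding herm_def by simp

lemma herm_J_self: "herm a (J a) = 0"
  by (simp add: herm_J_right)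

lemma cform_to_T10_herm: "cform \<alpha> (to_T10 a) (to_T10 (J b)) = 4 * herm a b"
  unfolding herm_def by (rule cform_to_T10)

lemma bilinear_Re_herm: "bilinear (\<lambda>a b. Re (herm a b))"
  unfolding bilinear_def by (auto intro!: linearI)

lemma strictly_positive_herm:
  assumes "strictly_positive I J \<alpha>" and "a \<noteq> 0"
  shows "Im (herm a a) = 0" "Re (herm a a) > 0"
proof -
  have "to_T10 a \<in> T10 I" "to_T10 a \<noteq> 0"
    using to_T10_in_T10 to_T10_inj[of a 0] assms(2) by auto
  then have "Im (cform \<alpha> (to_T10 a) (cext J (cconj (to_T10 a)))) = 0 \<and>
      Re (cform \<alpha> (to_T10 a) (cext J (cconj (to_T10 a)))) > 0"
    using assms(1) unfolding strictly_positive_def by blast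
  then show "Im (herm a a) = 0" "Re (herm a a) > 0"
    by (simp_all add: cform_to_T10 herm_def)
qed

(* Polarising the reality of herm at a + b and at a + I b gives herm b a = cnj (herm a b). *)
lemma q_real_if_herm_real:
  assumes real: "\<And>a. Im (herm a a) = 0"
  shows "q_real J \<alpha>"
proof -
  have herm_commute: "herm b a = cnj (herm a b)" for a b
  proof -
    have "Im (herm a b + herm b a) = 0"
      using real[of "a + b"] real[of a] real[of b] by simp
    moreover have "Im (- \<i> * herm a b + \<i> * herm b a) = 0"
      using real[of "a + I b"] real[of a] real[of "I b"] by (simp add: algebra_simps)
    ultimately show ?thesis
      by (simp add: complex_eq_iff)
  qed
  have "\<alpha> (J x) (J y) = cnj (\<alpha> x y)" for x y
    using herm_commute[of y "J x"] antisym[of y x] unfolding herm_def by simp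
  then show ?thesis
    unfolding q_real_def by blast
qed

end

locale q_real_form20 = form20_on I J \<alpha>
  for I J :: "'v::real_vector \<Rightarrow> 'v" and \<alpha> :: "'v \<Rightarrow> 'v \<Rightarrow> complex" +
  assumes q_real: "q_real J \<alpha>"
begin

lemma J_J_form [simp]: "\<alpha> (J x) (J y) = cnj (\<alpha> x y)"
  using q_real unfolding q_real_def by blast

lemma herm_J_left: "herm (J a) b = cnj (\<alpha> a b)"
  unfolding herm_def by simp

lemma herm_J_J [simp]: "herm (J a) (J b) = cnj (herm a b)"
  using J_J_form[of a "- J b"] unfolding herm_def by simp

lemma herm_commute: "herm b a = cnj (herm a b)"
  using herm_J_J[of a b] antisym[of b "J a"] unfolding herm_def by simp

lemma herm_self_real: "Im (herm a a) = 0"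
  using herm_commute[of a a] by (simp add: complex_eq_iff)

(* b is orthogonal to the quaternionic line through a. *)
definition qorth :: "'v \<Rightarrow> 'v \<Rightarrow> bool" where
  "qorth a b \<longleftrightarrow> \<alpha> a b = 0 \<and> \<alpha> a (J b) = 0"

lemma qorth_iff_herm: "qorth a b \<longleftrightarrow> herm a b = 0 \<and> herm a (J b) = 0"
  unfolding qorth_def herm_J_right by (auto simp: herm_def)

lemma qorth_sym: "qorth a b \<Longrightarrow> qorth b a"
  unfolding qorth_iff_herm using herm_commute[of a b] herm_commute[of a "J b"]
  by (simp add: herm_J_right herm_J_left)

lemma subspace_qorth: "subspace {w. qorth a w}"
  unfolding qorth_def by (rule subspaceI) auto

lemma qorth_I: "qorth a w \<Longrightarrow> qorth a (I w)"
  unfolding qorth_def by (simp add: J_I)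

lemma qorth_J: "qorth a w \<Longrightarrow> qorth a (J w)"
  unfolding qorth_def by simp

lemma qorth_iff_Re_herm_qmul: "qorth a w \<longleftrightarrow> (\<forall>c. Re (herm (qmul c a) w) = 0)"
proof -
  have "(\<forall>c. Re (herm (qmul c a) w) = 0) \<longleftrightarrow>
      Re (herm a w) = 0 \<and> Re (herm (I a) w) = 0 \<and> Re (herm (J a) w) = 0 \<and> Re (herm (I (J a)) w) = 0"
    unfolding qmul_def by (auto simp: all_bool_eq)
  also have "\<dots> \<longleftrightarrow> herm a w = 0 \<and> \<alpha> a w = 0"
    by (auto simp: herm_J_left complex_eq_iff)
  finally show ?thesis
    unfolding qorth_def herm_def by auto
qed

lemma herm_qmul_qorth:
  assumes "qorth a b"
  shows "herm (qmul c a) (qmul c' b) = 0"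
proof -
  have "herm a b = 0" "herm a (J b) = 0"
    using assms unfolding qorth_iff_herm by auto
  moreover have "herm (J a) b = 0"
    using \<open>herm a (J b) = 0\<close> herm_J_right[of a b] by (simp add: herm_J_left)
  ultimately show ?thesis
    unfolding qmul_def by (cases c; cases c') auto
qed

lemma Re_herm_qmul_self:
  assumes "c \<noteq> c'"
  shows "Re (herm (qmul c a) (qmul c' a)) = 0"
  using assms herm_self_real[of a] herm_self_real[of a, unfolded herm_def] herm_J_self[of a] herm_commute[of a "J a"]
  unfolding qmul_def
  by (cases c; cases c') (auto simp: herm_J_left)

end

lemma quaternionic_structure_if_hypercomplex:
  assumes "hypercomplex I J K"
  shows "quaternionic_structure I J"
  using assms hypercomplex_anticommute[OF assms]
  unfolding hypercomplex_def quaternionic_structure_def by blast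

locale form_pair = quaternionic_structure I J for I J :: "'v::euclidean_space \<Rightarrow> 'v" +
  fixes \<Omega>1 \<Omega>2 :: "'v \<Rightarrow> 'v \<Rightarrow> complex"
  assumes form20_\<Omega>1: "form20 I \<Omega>1" and positive_\<Omega>1: "strictly_positive I J \<Omega>1"
    and form20_\<Omega>2: "form20 I \<Omega>2" and q_real_\<Omega>2: "q_real J \<Omega>2"
begin

sublocale \<Omega>1: q_real_form20 I J \<Omega>1
proof -
  interpret form20_on I J \<Omega>1
    by unfold_locales (rule form20_\<Omega>1)
  have "Im (herm a a) = 0" for a
    using strictly_positive_herm(1)[OF positive_\<Omega>1, of a] by (cases "a = 0") auto
  then show "q_real_form20 I J \<Omega>1"
    by unfold_locales (rule q_real_if_herm_real)
qed

sublocale \<Omega>2: q_real_form20 I J \<Omega>2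
  by unfold_locales (rule form20_\<Omega>2, rule q_real_\<Omega>2)

lemma Re_herm1_pos: "a \<noteq> 0 \<Longrightarrow> Re (\<Omega>1.herm a a) > 0"
  by (rule \<Omega>1.strictly_positive_herm(2)[OF positive_\<Omega>1])

lemma invariant_subspace_eigenvector:
  assumes W: "subspace W" "\<And>w. w \<in> W \<Longrightarrow> I w \<in> W" "\<And>w. w \<in> W \<Longrightarrow> J w \<in> W"
    and "w0 \<in> W" "w0 \<noteq> 0"
  obtains e l where "e \<in> W" "e \<noteq> 0" "\<And>w. w \<in> W \<Longrightarrow> \<Omega>2 e w = of_real l * \<Omega>1 e w"
proof -
  obtain e l where e: "e \<in> W" "e \<noteq> 0"
    and eigen: "\<And>w. w \<in> W \<Longrightarrow> Re (\<Omega>2.herm e w) = l * Re (\<Omega>1.herm e w)"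
  proof (rule generalized_eigenvector_exists[OF \<Omega>1.bilinear_Re_herm \<Omega>2.bilinear_Re_herm])
    show "Re (\<Omega>1.herm a b) = Re (\<Omega>1.herm b a)" "Re (\<Omega>2.herm a b) = Re (\<Omega>2.herm b a)" for a b
      using \<Omega>1.herm_commute[of a b] \<Omega>2.herm_commute[of a b] by simp_all
  qed (use Re_herm1_pos W(1) \<open>w0 \<in> W\<close> \<open>w0 \<noteq> 0\<close> in auto)
  \<comment> \<open>the real relation at I w is the imaginary part of the relation at w\<close>
  have herm_eigen: "\<Omega>2.herm e w = of_real l * \<Omega>1.herm e w" if "w \<in> W" for w
    using eigen[OF that] eigen[OF W(2)[OF that]] by (simp add: complex_eq_iff)
  have "\<Omega>2 e w = of_real l * \<Omega>1 e w" if "w \<in> W" for w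
    using herm_eigen[OF W(3)[OF that]] by (simp add: \<Omega>1.herm_J_right \<Omega>2.herm_J_right)
  then show thesis
    using that e by blast
qed

definition qorth_compl :: "(nat \<Rightarrow> 'v) \<Rightarrow> nat \<Rightarrow> 'v set" where
  "qorth_compl x k = {w. \<forall>j<k. \<Omega>1.qorth (x j) w}"

lemma subspace_qorth_compl: "subspace (qorth_compl x k)"
proof -
  have "qorth_compl x k = (\<Inter>j<k. {w. \<Omega>1.qorth (x j) w})"
    unfolding qorth_compl_def by auto
  then show ?thesis
    by (simp add: subspace_Int \<Omega>1.subspace_qorth)
qed

lemma qorth_compl_I: "w \<in> qorth_compl x k \<Longrightarrow> I w \<in> qorth_compl x k"
  and qorth_compl_J: "w \<in> qorth_compl x k \<Longrightarrow> J w \<in> qorth_compl x k"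
  unfolding qorth_compl_def by (auto intro: \<Omega>1.qorth_I \<Omega>1.qorth_J)

lemma qorth_compl_nontrivial:
  assumes "4 * k < DIM('v)"
  obtains w where "w \<in> qorth_compl x k" "w \<noteq> 0"
proof -
  define S where "S = (\<lambda>(j, c). qmul c (x j)) ` ({..<k} \<times> UNIV)"
  have "dim S \<le> card S"
    unfolding S_def by (intro dim_le_card') simp
  also have "\<dots> \<le> card ({..<k} \<times> (UNIV :: (bool \<times> bool) set))"
    unfolding S_def by (rule card_image_le) simp
  finally have "dim S < DIM('v)"
    using assms by (simp add: card_cartesian_product)
  then obtain w where "w \<noteq> 0" and w: "\<And>s. s \<in> S \<Longrightarrow> Re (\<Omega>1.herm s w) = 0"
    by (rule bilinear_form_kernel_nontrivial[OF \<Omega>1.bilinear_Re_herm]) blast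
  have "w \<in> qorth_compl x k"
    unfolding qorth_compl_def \<Omega>1.qorth_iff_Re_herm_qmul using w unfolding S_def by blast
  then show thesis
    using that \<open>w \<noteq> 0\<close> by blast
qed

(* x i is a minimiser of the Rayleigh quotient Re herm2 / Re herm1 on the quaternionic orthogonal
   complement of x 0, ..., x (i - 1); only the resulting eigenvector relation is recorded. *)
definition adapted_seq :: "nat \<Rightarrow> (nat \<Rightarrow> 'v) \<Rightarrow> bool" where
  "adapted_seq k x \<longleftrightarrow> (\<forall>i<k. x i \<noteq> 0 \<and> x i \<in> qorth_compl x i \<and>
     (\<exists>l::real. \<forall>w\<in>qorth_compl x i. \<Omega>2 (x i) w = of_real l * \<Omega>1 (x i) w))"

lemma adapted_seq_exists: "4 * k \<le> DIM('v) \<Longrightarrow> \<exists>x. adapted_seq k x"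
proof (induction k)
  case 0
  show ?case
    unfolding adapted_seq_def by simp
next
  case (Suc k)
  then obtain x where x: "adapted_seq k x"
    by auto
  have "4 * k < DIM('v)"
    using Suc.prems by simp
  then obtain w0 where "w0 \<in> qorth_compl x k" "w0 \<noteq> 0"
    by (rule qorth_compl_nontrivial) blast
  then obtain e l where e: "e \<in> qorth_compl x k" "e \<noteq> 0"
    and eigen: "\<And>w. w \<in> qorth_compl x k \<Longrightarrow> \<Omega>2 e w = of_real l * \<Omega>1 e w"
    using invariant_subspace_eigenvector[OF subspace_qorth_compl qorth_compl_I qorth_compl_J] by blast
  have "qorth_compl (x(k := e)) i = qorth_compl x i" if "i \<le> k" for i
    using that unfolding qorth_compl_def by auto
  then have "adapted_seq (Suc k) (x(k := e))"
    using x e eigen unfolding adapted_seq_def by (auto simp: less_Suc_eq)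
  then show ?case
    by blast
qed

lemma adapted_seq_qorth_less:
  assumes "adapted_seq k x" "i < j" "j < k"
  shows "\<Omega>1.qorth (x i) (x j) \<and> \<Omega>2.qorth (x i) (x j)"
proof -
  have "i < k"
    using assms by simp
  then obtain l where eigen: "\<And>w. w \<in> qorth_compl x i \<Longrightarrow> \<Omega>2 (x i) w = of_real l * \<Omega>1 (x i) w"
    using assms(1) unfolding adapted_seq_def by blast
  have "x j \<in> qorth_compl x j"
    using assms unfolding adapted_seq_def by auto
  then have "x j \<in> qorth_compl x i" "\<Omega>1.qorth (x i) (x j)"
    using assms(2) unfolding qorth_compl_def by auto
  then show ?thesis
    using eigen[of "x j"] eigen[OF qorth_compl_J] unfolding \<Omega>1.qorth_def \<Omega>2.qorth_def by simp
qed

lemma adapted_seq_qorth: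
  assumes "adapted_seq k x" "i < k" "j < k" "i \<noteq> j"
  shows "\<Omega>1.qorth (x i) (x j) \<and> \<Omega>2.qorth (x i) (x j)"
  using assms adapted_seq_qorth_less[OF assms(1)] \<Omega>1.qorth_sym \<Omega>2.qorth_sym
  by (metis linorder_neqE_nat)

lemma qmul_eq_0_iff [simp]: "qmul c a = 0 \<longleftrightarrow> a = 0"
  unfolding qmul_def by auto

lemma adapted_seq_qframe_spans:
  assumes "adapted_seq n x" and "DIM('v) = 4 * n"
  shows "span ((\<lambda>(j, c). qmul c (x j)) ` ({..<n} \<times> UNIV)) = UNIV"
proof -
  let ?v = "\<lambda>(j, c). qmul c (x j)" and ?A = "{..<n} \<times> (UNIV :: (bool \<times> bool) set)"
  have "inj_on ?v ?A \<and> independent (?v ` ?A)"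
  proof (rule real_vector.orthogonal_family_independent[where h = "\<lambda>a b. Re (\<Omega>1.herm a b)"])
    show "Re (\<Omega>1.herm (?v p) (?v p)) \<noteq> 0" if p: "p \<in> ?A" for p
    proof -
      obtain j c where "p = (j, c)" "j < n"
        using p by (metis SigmaE lessThan_iff)
      then have "qmul c (x j) \<noteq> 0"
        using assms(1) unfolding adapted_seq_def by simp
      then show ?thesis
        using Re_herm1_pos \<open>p = (j, c)\<close> by fastforce
    qed
    show "Re (\<Omega>1.herm (?v p) (?v q)) = 0" if pq: "p \<in> ?A" "q \<in> ?A" "p \<noteq> q" for p q
    proof -
      obtain j c j' c' where jc: "p = (j, c)" "q = (j', c')" "j < n" "j' < n"
        using pq(1,2) by (metis SigmaE lessThan_iff)
      show ?thesis
      proof (cases "j = j'")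
        case True
        then show ?thesis
          using jc pq(3) \<Omega>1.Re_herm_qmul_self by simp
      next
        case False
        then show ?thesis
          using jc adapted_seq_qorth[OF assms(1)] \<Omega>1.herm_qmul_qorth by simp
      qed
    qed
  qed simp_all
  moreover have "card (UNIV :: (bool \<times> bool) set) = 4"
    by (simp flip: UNIV_Times_UNIV add: card_cartesian_product)
  then have "card (?v ` ?A) = dim (UNIV :: 'v set)"
    using calculation assms(2) by (simp add: card_image card_cartesian_product)
  ultimately show ?thesis
    using card_eq_dim[of "?v ` ?A" UNIV] by auto
qed

lemma subspace_T10: "module.subspace cscale (T10 I)"
proof -
  interpret C: vector_space "cscale :: complex \<Rightarrow> 'v \<times> 'v \<Rightarrow> _"
    by (rule vector_space_cscale)
  show ?thesis
    unfolding T10_eq_range_to_T10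
  proof (rule C.subspaceI)
    show "0 \<in> range to_T10"
      using rangeI[of to_T10 0] by simp
    show "u + v \<in> range to_T10" if "u \<in> range to_T10" "v \<in> range to_T10" for u v
      using that by (auto simp flip: to_T10_add)
    show "cscale c u \<in> range to_T10" if "u \<in> range to_T10" for c u
      using that by (auto simp: cscale_to_T10)
  qed
qed

lemma adapted_seq_T10_basis:
  assumes "adapted_seq n x" and "DIM('v) = 4 * n"
  defines "B \<equiv> (\<lambda>i. to_T10 (x i)) ` {..<n} \<union> (\<lambda>i. to_T10 (J (x i))) ` {..<n}"
  shows "card B = 2 * n \<and> \<not> module.dependent cscale B \<and> module.span cscale B = T10 I"
proof -
  interpret C: vector_space "cscale :: complex \<Rightarrow> 'v \<times> 'v \<Rightarrow> _"
    by (rule vector_space_cscale)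
  let ?v = "\<lambda>(j, b). to_T10 (qmul (False, b) (x j))" and ?A = "{..<n} \<times> (UNIV :: bool set)"
  have B: "B = ?v ` ?A"
    unfolding B_def qmul_def by (auto simp: image_iff ex_bool_eq) blast+
  have "inj_on ?v ?A \<and> C.independent (?v ` ?A)"
  proof (rule C.orthogonal_family_independent[where h = "\<lambda>z w. cform \<Omega>1 z (cext J (cconj w))"])
    show "cform \<Omega>1 (?v p) (cext J (cconj (?v p))) \<noteq> 0" if p: "p \<in> ?A" for p
    proof -
      obtain j b where "p = (j, b)" "j < n"
        using p by (metis SigmaE lessThan_iff)
      then have "qmul (False, b) (x j) \<noteq> 0"
        using assms(1) unfolding adapted_seq_def by simp
      then show ?thesis
        using Re_herm1_pos \<open>p = (j, b)\<close> by (fastforce simp: \<Omega>1.cform_to_T10_herm)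
    qed
    show "cform \<Omega>1 (?v p) (cext J (cconj (?v q))) = 0" if pq: "p \<in> ?A" "q \<in> ?A" "p \<noteq> q" for p q
    proof -
      obtain j b j' b' where jb: "p = (j, b)" "q = (j', b')" "j < n" "j' < n"
        using pq(1,2) by (metis SigmaE lessThan_iff)
      have "\<Omega>1.herm (qmul (False, b) (x j)) (qmul (False, b') (x j')) = 0"
      proof (cases "j = j'")
        case True
        then show ?thesis
          using jb pq(3) \<Omega>1.herm_J_self \<Omega>1.herm_commute[of "x j" "J (x j)"]
          unfolding qmul_def by auto
      next
        case False
        then show ?thesis
          using jb adapted_seq_qorth[OF assms(1)] \<Omega>1.herm_qmul_qorth by simp
      qed
      then show ?thesis
        using jb by (simp add: \<Omega>1.cform_to_T10_herm)
    qed
  qed (simp_all add: cform_add_left cform_cscale_left \<Omega>1.bilinear)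
  then have inj: "inj_on ?v ?A" and indep: "C.independent B"
    unfolding B by blast+
  have "card B = 2 * n"
    unfolding B using card_image[OF inj] by (simp add: card_cartesian_product)
  moreover have "C.span B \<subseteq> T10 I"
    by (rule C.span_minimal[OF _ subspace_T10]) (auto simp: B_def to_T10_in_T10)
  moreover have "T10 I \<subseteq> C.span B"
  proof -
    define P where "P = {a. to_T10 a \<in> C.span B}"
    have "subspace P"
      unfolding P_def
      by (rule subspaceI) (auto simp: to_T10_add to_T10_scaleR C.span_zero C.span_add C.span_scale)
    moreover have "qmul c (x j) \<in> P" if "j < n" for c j
    proof -
      have base: "to_T10 (qmul (False, b) (x j)) \<in> C.span B" for b
        unfolding B using that by (intro C.span_base) auto
      have "qmul (True, b) (x j) = I (qmul (False, b) (x j))" for b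
        unfolding qmul_def by simp
      then have "to_T10 (qmul (True, b) (x j)) \<in> C.span B" for b
        using C.span_scale[OF base[of b], of \<i>] by (simp add: to_T10_I)
      then show ?thesis
        unfolding P_def using base by (cases c; cases "fst c") auto
    qed
    ultimately have "span ((\<lambda>(j, c). qmul c (x j)) ` ({..<n} \<times> UNIV)) \<subseteq> P"
      by (intro span_minimal) auto
    then show ?thesis
      unfolding adapted_seq_qframe_spans[OF assms(1,2)] T10_eq_range_to_T10 P_def by auto
  qed
  ultimately show ?thesis
    using indep by blast
qed

end

theorem lemma3:
  fixes I J K :: "'v::euclidean_space \<Rightarrow> 'v"
    and \<Omega>1 \<Omega>2 :: "'v \<Rightarrow> 'v \<Rightarrow> complex"
    and n :: nat
  assumes "hypercomplex I J K"
    and "DIM('v) = 4 * n"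
    and "form20 I \<Omega>1" and "strictly_positive I J \<Omega>1"
    and "form20 I \<Omega>2" and "q_real J \<Omega>2"
  shows "\<exists>e :: nat \<Rightarrow> 'v \<times> 'v.
           (\<forall>i<n. e i \<in> T10 I) \<and>
           (let B = e ` {..<n} \<union> (\<lambda>i. cext J (cconj (e i))) ` {..<n} in
              card B = 2 * n \<and> \<not> module.dependent cscale B \<and> module.span cscale B = T10 I) \<and>
           (\<forall>i<n. \<forall>j<n. i \<noteq> j \<longrightarrow>
               cform \<Omega>1 (e i) (e j) = 0 \<and> cform \<Omega>2 (e i) (e j) = 0 \<and>
               cform \<Omega>1 (e i) (cext J (cconj (e j))) = 0 \<and>
               cform \<Omega>2 (e i) (cext J (cconj (e j))) = 0)"
proof -
  interpret form_pair I J \<Omega>1 \<Omega>2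
    by (intro form_pair.intro form_pair_axioms.intro quaternionic_structure_if_hypercomplex[OF assms(1)])
      (fact assms)+
  obtain x where x: "adapted_seq n x"
    using adapted_seq_exists assms(2) by auto
  show ?thesis
  proof (intro exI[of _ "\<lambda>i. to_T10 (x i)"] conjI)
    show "\<forall>i<n. to_T10 (x i) \<in> T10 I"
      by (simp add: to_T10_in_T10)
    show "let B = (\<lambda>i. to_T10 (x i)) ` {..<n} \<union> (\<lambda>i. cext J (cconj (to_T10 (x i)))) ` {..<n} in
        card B = 2 * n \<and> \<not> module.dependent cscale B \<and> module.span cscale B = T10 I"
      using adapted_seq_T10_basis[OF x assms(2)] by simp
    show "\<forall>i<n. \<forall>j<n. i \<noteq> j \<longrightarrow>
        cform \<Omega>1 (to_T10 (x i)) (to_T10 (x j)) = 0 \<and> cform \<Omega>2 (to_T10 (x i)) (to_T10 (x j)) = 0 \<and>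
        cform \<Omega>1 (to_T10 (x i)) (cext J (cconj (to_T10 (x j)))) = 0 \<and>
        cform \<Omega>2 (to_T10 (x i)) (cext J (cconj (to_T10 (x j)))) = 0"
      using adapted_seq_qorth[OF x]
      by (simp add: \<Omega>1.cform_to_T10 \<Omega>2.cform_to_T10 \<Omega>1.qorth_def \<Omega>2.qorth_def)
  qed
qed

end
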